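(* Let $F$ be a unit tree and let $!E,G,G'$ be units of $F$ such that $!E$ dominates $G$ in $F$ and $G'$ is the parent of $G$. Then: (a) if $G'$ is a $\wedge$- or $\vee$-unit, then $!E$ dominates $G'$ in $F$; (b) if $G'$ is a $!$-unit, then either $G'=!E$ or $!E$ dominates $G'$ in $F$.
   Context: Formulas are built from atoms by $\neg$ (on atoms only), binary $\wedge,\vee$ and unary $!$ (branching recurrence) and $?$ (branching corecurrence). Fix a formula $\mathbb{F}_0$. Oformulas are occurrences of subformulas of $\mathbb{F}_0$. Politerals are occurrences of literals $P$ or $\neg P$ not in the scope of $\neg$. The modal depth of an oformula is the number of its proper superoccurrences of the form $!E$ or $?E$. A unit is $E[\vec x]$, with $E$ an oformula and $\vec x$ a tuple of infinite bitstrings whose length is the modal depth of $E$. Parenthood: - $G_0[\vec x]$ and $G_1[\vec x]$ are the children of $(G_0\wedge G_1)[\vec x]$ and of $(G_0\vee G_1)[\vec x]$; - the $G[\vec x,y]$, for all infinite bitstrings $y$, are the children of $!G[\vec x]$ and of $?G[\vec x]$. The root is $\mathbb{F}_0[\,]$. "Subunit" and "superunit" are the reflexive-transitive closures of the child relation and its converse, and "proper" means distinct. The $\mathbb{F}_0$-origin $\tilde E$ of $E[\vec x]$ is $E$. $!$-, $?$-, $\wedge$-, $\vee$- and politeral units are those whose origin is of the corresponding form. The smallest common superunit of two units is their common superunit that is a subunit of all their common superunits. $E$ drives $G$ through $H$ iff $H$ is the smallest common superunit of $E,G$ and no proper $?$-superunit of $E$ is a subunit of $H$. A unit tree is a nonempty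 set $S$ of units such that, for each $E\in S$: all superunits of $E$ are in $S$; if $E$ is a $\wedge$- or $\vee$-unit, both children of $E$ are in $S$; and if $E$ is a $!$- or $?$-unit, at least one child of $E$ is in $S$. Runs are sequences of labeled moves $\wp\beta$ with $\wp\in\{\top,\bot\}$. For a run $\Theta$ and a string $\alpha$, $\Theta^{\alpha}$ keeps the labmoves whose move begins with $\alpha$ and deletes that prefix. For an infinite bitstring $y$, $\Theta^{\preceq y}$ keeps the labmoves $\wp\,u.\beta$ with $u$ a finite prefix of $y$ and deletes "$u.$". Fix an arbitrary run $\Omega$. Its projection on $\mathbb{F}_0[\,]$ is $\Omega$. If $\Theta$ is the projection on $E[\vec x]$, then the projection on the child $G_i[\vec x]$ of a $\wedge$/$\vee$-unit is $\Theta^{i.}$, and on the child $G[\vec x,y]$ of a $!$/$?$-unit it is $\Theta^{\preceq y}$. Politeral units $L,M$ are opposite iff $\tilde L,\tilde M$ are literals one of which is the negation of the other and, for each $\wp\in\{\top,\bot\}$, the set of $\wp$-labeled moves in the projection of $\Omega$ on $L$ equals the set of $\neg\wp$-labeled moves in the projection on $M$. For a unit tree $F$ and $!E,G\in F$, a $!E$-over-$G$ domination chain in $F$ is a sequence $L_1,M_1,X_1,\dots,L_n,M_n,X_n$ ($n\ge1$) of units such that, writing $L_{n+1}=G$, for each $i\le n$: 1. $L_i,M_i$ are opposite politeral units of $F$; 2. $M_i$ drives $L_{i+1}$ through $X_i$; 3. $M_i$ drives no $L_j$ with $i+2\le j\le n+1$; 4. $M_i$ is not a subunit of $!E$; 5.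 $L_1$ is a subunit of $!E$. $!E$ dominates $G$ in $F$ iff $!E,G\in F$ and either $G$ is a proper subunit of $!E$ or there is a $!E$-over-$G$ domination chain in $F$. *)

theory Defs
  imports Main
begin

datatype 'a formula =
    Atom 'a
  | Neg 'a
  | And "'a formula" "'a formula"
  | Or "'a formula" "'a formula"
  | Bang "'a formula"
  | Quest "'a formula"

text \<open>Occurrences (oformulas) of subformulas of F0 are positions (paths from the root).
  For binary connectives the children are indexed 0 and 1; for unary ones by 0.\<close>
fun subf :: "'a formula \<Rightarrow> nat list \<Rightarrow> 'a formula option" where
  "subf f [] = Some f"
| "subf (And a b) (i # p) = (if i = 0 then subf a p else if i = 1 then subf b p else None)"
| "subf (Or a b) (i # p) = (if i = 0 then subf a p else if i = 1 then subf b p else None)"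
| "subf (Bang a) (i # p) = (if i = 0 then subf a p else None)"
| "subf (Quest a) (i # p) = (if i = 0 then subf a p else None)"
| "subf _ _ = None"

fun is_modal_f :: "'a formula \<Rightarrow> bool" where
  "is_modal_f (Bang _) = True"
| "is_modal_f (Quest _) = True"
| "is_modal_f _ = False"

definition is_oformula :: "'a formula \<Rightarrow> nat list \<Rightarrow> bool" where
  "is_oformula F0 p \<longleftrightarrow> subf F0 p \<noteq> None"

text \<open>Modal depth: number of proper superoccurrences of the form !E or ?E.\<close>
definition modal_depth :: "'a formula \<Rightarrow> nat list \<Rightarrow> nat" where
  "modal_depth F0 p =
     length (filter (\<lambda>k. case subf F0 (take k p) of Some g \<Rightarrow> is_modal_f g | None \<Rightarrow> False)
                    [0..<length p])"

type_synonym bitstring = "nat \<Rightarrow> bool"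
type_synonym ounit = "nat list \<times> bitstring list"

definition is_unit :: "'a formula \<Rightarrow> ounit \<Rightarrow> bool" where
  "is_unit F0 u \<longleftrightarrow> is_oformula F0 (fst u) \<and> length (snd u) = modal_depth F0 (fst u)"

definition root_unit :: ounit where
  "root_unit = ([], [])"

definition is_and_unit :: "'a formula \<Rightarrow> ounit \<Rightarrow> bool" where
  "is_and_unit F0 u \<longleftrightarrow> (\<exists>a b. subf F0 (fst u) = Some (And a b))"
definition is_or_unit :: "'a formula \<Rightarrow> ounit \<Rightarrow> bool" where
  "is_or_unit F0 u \<longleftrightarrow> (\<exists>a b. subf F0 (fst u) = Some (Or a b))"
definition is_bang_unit :: "'a formula \<Rightarrow> ounit \<Rightarrow> bool" where
  "is_bang_unit F0 u \<longleftrightarrow> (\<exists>a. subf F0 (fst u) = Some (Bang a))"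
definition is_quest_unit :: "'a formula \<Rightarrow> ounit \<Rightarrow> bool" where
  "is_quest_unit F0 u \<longleftrightarrow> (\<exists>a. subf F0 (fst u) = Some (Quest a))"
definition is_politeral_unit :: "'a formula \<Rightarrow> ounit \<Rightarrow> bool" where
  "is_politeral_unit F0 u \<longleftrightarrow> (\<exists>P. subf F0 (fst u) = Some (Atom P) \<or> subf F0 (fst u) = Some (Neg P))"

definition child :: "'a formula \<Rightarrow> ounit \<Rightarrow> ounit \<Rightarrow> bool" where
  "child F0 u v \<longleftrightarrow> is_unit F0 u \<and>
     (((is_and_unit F0 u \<or> is_or_unit F0 u) \<and> (\<exists>i<2. v = (fst u @ [i], snd u)))
    \<or> ((is_bang_unit F0 u \<or> is_quest_unit F0 u) \<and> (\<exists>y. v = (fst u @ [0], snd u @ [y]))))"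

definition subunit :: "'a formula \<Rightarrow> ounit \<Rightarrow> ounit \<Rightarrow> bool" where
  "subunit F0 v u \<longleftrightarrow> is_unit F0 u \<and> (child F0)\<^sup>*\<^sup>* u v"

definition proper_subunit :: "'a formula \<Rightarrow> ounit \<Rightarrow> ounit \<Rightarrow> bool" where
  "proper_subunit F0 v u \<longleftrightarrow> subunit F0 v u \<and> v \<noteq> u"

definition smallest_common_superunit :: "'a formula \<Rightarrow> ounit \<Rightarrow> ounit \<Rightarrow> ounit \<Rightarrow> bool" where
  "smallest_common_superunit F0 E G H \<longleftrightarrow>
     subunit F0 E H \<and> subunit F0 G H \<and>
     (\<forall>K. subunit F0 E K \<and> subunit F0 G K \<longrightarrow> subunit F0 H K)"

definition drives :: "'a formula \<Rightarrow> ounit \<Rightarrow> ounit \<Rightarrow> ounit \<Rightarrow> bool" where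
  "drives F0 E G H \<longleftrightarrow> smallest_common_superunit F0 E G H \<and>
     \<not> (\<exists>Q. proper_subunit F0 E Q \<and> is_quest_unit F0 Q \<and> subunit F0 Q H)"

definition unit_tree :: "'a formula \<Rightarrow> ounit set \<Rightarrow> bool" where
  "unit_tree F0 S \<longleftrightarrow> S \<noteq> {} \<and> (\<forall>E\<in>S. is_unit F0 E) \<and>
     (\<forall>E\<in>S.
        (\<forall>K. subunit F0 E K \<longrightarrow> K \<in> S) \<and>
        ((is_and_unit F0 E \<or> is_or_unit F0 E) \<longrightarrow> (\<forall>K. child F0 E K \<longrightarrow> K \<in> S)) \<and>
        ((is_bang_unit F0 E \<or> is_quest_unit F0 E) \<longrightarrow> (\<exists>K. child F0 E K \<and> K \<in> S)))"

datatype player = Top | Bot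

fun neg_player :: "player \<Rightarrow> player" where
  "neg_player Top = Bot" | "neg_player Bot = Top"

type_synonym move = string
type_synonym labmove = "player \<times> move"

text \<open>A run is a (finite or infinite) sequence of labmoves: position n holds Some lm,
  or None once the run has ended.\<close>
type_synonym run = "nat \<Rightarrow> labmove option"

definition is_run :: "run \<Rightarrow> bool" where
  "is_run \<Theta> \<longleftrightarrow> (\<forall>n. \<Theta> n = None \<longrightarrow> \<Theta> (Suc n) = None)"

definition sel :: "(labmove \<Rightarrow> bool) \<Rightarrow> run \<Rightarrow> nat \<Rightarrow> bool" where
  "sel P \<Theta> m \<longleftrightarrow> (\<exists>lm. \<Theta> m = Some lm \<and> P lm)"

text \<open>Keep the labmoves satisfying P (in order), transforming each by f.\<close>
definition rfilter :: "(labmove \<Rightarrow> bool) \<Rightarrow> (labmove \<Rightarrow> labmove) \<Rightarrow> run \<Rightarrow> run" where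
  "rfilter P f \<Theta> n =
     (if \<exists>m. sel P \<Theta> m \<and> card {k. k < m \<and> sel P \<Theta> k} = n
      then map_option f (\<Theta> (THE m. sel P \<Theta> m \<and> card {k. k < m \<and> sel P \<Theta> k} = n))
      else None)"

definition proj_prefix :: "string \<Rightarrow> run \<Rightarrow> run" where
  "proj_prefix \<alpha> \<Theta> = rfilter (\<lambda>(w, m). take (length \<alpha>) m = \<alpha>)
                                (\<lambda>(w, m). (w, drop (length \<alpha>) m)) \<Theta>"

definition bits :: "bool list \<Rightarrow> string" where
  "bits u = map (\<lambda>b. if b then CHR ''1'' else CHR ''0'') u"

text \<open>Theta^{<= y}: keep labmoves u.beta with u a finite prefix of y, and delete u.\<close>
definition proj_branch :: "bitstring \<Rightarrow> run \<Rightarrow> run" where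
  "proj_branch y \<Theta> = rfilter (\<lambda>(w, m). \<exists>n \<beta>. m = bits (map y [0..<n]) @ ''.'' @ \<beta>)
                              (\<lambda>(w, m). (w, tl (dropWhile (\<lambda>c. c \<noteq> CHR ''.'') m))) \<Theta>"

definition child_label :: "nat \<Rightarrow> string" where
  "child_label i = (if i = 0 then ''0.'' else ''1.'')"

fun proj_aux :: "'a formula \<Rightarrow> nat list \<Rightarrow> bitstring list \<Rightarrow> run \<Rightarrow> run" where
  "proj_aux f [] xs \<Theta> = \<Theta>"
| "proj_aux (And a b) (i # p) xs \<Theta> = proj_aux (if i = 0 then a else b) p xs (proj_prefix (child_label i) \<Theta>)"
| "proj_aux (Or a b) (i # p) xs \<Theta> = proj_aux (if i = 0 then a else b) p xs (proj_prefix (child_label i) \<Theta>)"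
| "proj_aux (Bang a) (i # p) (y # xs) \<Theta> = proj_aux a p xs (proj_branch y \<Theta>)"
| "proj_aux (Quest a) (i # p) (y # xs) \<Theta> = proj_aux a p xs (proj_branch y \<Theta>)"
| "proj_aux _ _ _ \<Theta> = \<Theta>"

definition projection :: "'a formula \<Rightarrow> run \<Rightarrow> ounit \<Rightarrow> run" where
  "projection F0 \<Omega> u = proj_aux F0 (fst u) (snd u) \<Omega>"

definition moves_of :: "player \<Rightarrow> run \<Rightarrow> move set" where
  "moves_of w \<Theta> = {\<beta>. \<exists>n. \<Theta> n = Some (w, \<beta>)}"

definition opposite :: "'a formula \<Rightarrow> run \<Rightarrow> ounit \<Rightarrow> ounit \<Rightarrow> bool" where
  "opposite F0 \<Omega> L M \<longleftrightarrow> is_politeral_unit F0 L \<and> is_politeral_unit F0 M \<and>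
     (\<exists>P. (subf F0 (fst L) = Some (Atom P) \<and> subf F0 (fst M) = Some (Neg P)) \<or>
          (subf F0 (fst L) = Some (Neg P) \<and> subf F0 (fst M) = Some (Atom P))) \<and>
     (\<forall>w. moves_of w (projection F0 \<Omega> L) = moves_of (neg_player w) (projection F0 \<Omega> M))"

text \<open>Domination chain L_1,M_1,X_1,...,L_n,M_n,X_n encoded by functions on indices 1..n,
  with L (n+1) = G.\<close>
definition domination_chain ::
  "'a formula \<Rightarrow> run \<Rightarrow> ounit set \<Rightarrow> ounit \<Rightarrow> ounit \<Rightarrow> nat \<Rightarrow>
   (nat \<Rightarrow> ounit) \<Rightarrow> (nat \<Rightarrow> ounit) \<Rightarrow> (nat \<Rightarrow> ounit) \<Rightarrow> bool" where
  "domination_chain F0 \<Omega> F BE G n L M X \<longleftrightarrow>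
     n \<ge> 1 \<and> L (Suc n) = G \<and>
     (\<forall>i. 1 \<le> i \<and> i \<le> n \<longrightarrow>
        L i \<in> F \<and> M i \<in> F \<and> opposite F0 \<Omega> (L i) (M i) \<and>
        drives F0 (M i) (L (Suc i)) (X i) \<and>
        (\<forall>j. i + 2 \<le> j \<and> j \<le> Suc n \<longrightarrow> \<not> (\<exists>H. drives F0 (M i) (L j) H)) \<and>
        \<not> subunit F0 (M i) BE) \<and>
     subunit F0 (L 1) BE"

definition dominates :: "'a formula \<Rightarrow> run \<Rightarrow> ounit set \<Rightarrow> ounit \<Rightarrow> ounit \<Rightarrow> bool" where
  "dominates F0 \<Omega> F BE G \<longleftrightarrow> is_bang_unit F0 BE \<and> BE \<in> F \<and> G \<in> F \<and>
     (proper_subunit F0 G BE \<or> (\<exists>n L M X. domination_chain F0 \<Omega> F BE G n L M X))"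

end

theory Submission
  imports Defs
begin

(* The proof rests on the shape of the unit hierarchy: every unit has at most one
   parent, so the superunits of a unit form a chain, and the parent G' of G is the
   least proper superunit of G.  From this we derive that driving a unit is
   insensitive to replacing the target G by its parent G':
     - if M is not a subunit of G, then M and G have exactly the same common
       superunits as M and G', so "M drives G through H" iff "M drives G' through H";
     - if M is a subunit of G, then M drives G through G itself, and also drives G'
       through G' as long as G' is not a ?-unit.
   Hence the last target of a domination chain can be moved from G to G' (the
   non-driving conditions transfer backwards), while a domination by proper
   subunit-hood lifts to the parent directly.  The theorem then only needs that
   \<and>-, \<or>- and !-units are not ?-units, and that \<and>/\<or>-units differ from the !-unit. *)

text \<open>A child lies one level deeper than its parent; hence subunit-hood strictly
  increases depth, which gives antisymmetry.\<close>

lemma child_length: "child F0 u v \<Longrightarrow> length (fst v) = Suc (length (fst u))"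
  unfolding child_def by auto

lemma descendant_length:
  "(child F0)\<^sup>*\<^sup>* u v \<Longrightarrow> u = v \<or> length (fst u) < length (fst v)"
  by (induction rule: rtranclp_induct) (auto dest: child_length)

text \<open>A unit has at most one parent: the position of the parent is the position of the
  child minus its last step, and its bitstrings are determined by the kind of the parent.\<close>

lemma parent_unique:
  assumes "child F0 A G" "child F0 B G"
  shows "A = B"
proof -
  have pos: "fst A = butlast (fst G)" "fst B = butlast (fst G)"
    using assms unfolding child_def by auto
  then show ?thesis
    using assms
    unfolding child_def is_and_unit_def is_or_unit_def is_bang_unit_def is_quest_unit_def
    by (cases A; cases B) (auto, (metis snd_conv butlast_snoc)+)
qed

lemma subunit_refl: "is_unit F0 u \<Longrightarrow> subunit F0 u u"
  unfolding subunit_def by auto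

lemma subunit_trans: "subunit F0 a b \<Longrightarrow> subunit F0 b c \<Longrightarrow> subunit F0 a c"
  unfolding subunit_def by auto

lemma subunit_antisym: "subunit F0 v u \<Longrightarrow> subunit F0 u v \<Longrightarrow> u = v"
  unfolding subunit_def using descendant_length[of F0 u v] descendant_length[of F0 v u]
  by auto

lemma child_subunit: "child F0 G' G \<Longrightarrow> subunit F0 G G'"
  unfolding subunit_def by (auto simp: child_def)

lemma superunit_above_parent:
  assumes "subunit F0 G K" "K \<noteq> G" "child F0 G' G"
  shows "subunit F0 G' K"
proof -
  have K: "is_unit F0 K" and path: "(child F0)\<^sup>*\<^sup>* K G"
    using assms(1) unfolding subunit_def by auto
  from path show ?thesis
  proof (cases rule: rtranclp.cases)
    case rtrancl_refl
    then show ?thesis using assms(2) by simp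
  next
    case (rtrancl_into_rtrancl P)
    then have "P = G'" using parent_unique assms(3) by blast
    then show ?thesis using rtrancl_into_rtrancl K unfolding subunit_def by simp
  qed
qed

text \<open>Since parents are unique, the superunits of a unit are linearly ordered.\<close>

lemma ancestors_linear:
  "(child F0)\<^sup>*\<^sup>* A M \<Longrightarrow> (child F0)\<^sup>*\<^sup>* B M \<Longrightarrow>
   (child F0)\<^sup>*\<^sup>* A B \<or> (child F0)\<^sup>*\<^sup>* B A"
proof (induction arbitrary: B rule: rtranclp_induct)
  case base
  then show ?case by simp
next
  case (step K M)
  from step.prems show ?case
  proof (cases rule: rtranclp.cases)
    case rtrancl_refl
    then show ?thesis using step by auto
  next
    case (rtrancl_into_rtrancl P)
    then have "P = K" using parent_unique step by blast
    then show ?thesis using step.IH rtrancl_into_rtrancl by auto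
  qed
qed

lemma superunits_linear:
  "subunit F0 M A \<Longrightarrow> subunit F0 M B \<Longrightarrow> subunit F0 A B \<or> subunit F0 B A"
  unfolding subunit_def using ancestors_linear by blast

lemma smallest_common_superunit_unique:
  "smallest_common_superunit F0 M G H1 \<Longrightarrow> smallest_common_superunit F0 M G H2 \<Longrightarrow> H1 = H2"
  unfolding smallest_common_superunit_def using subunit_antisym by blast

lemma smallest_common_superunit_of_subunit:
  assumes "subunit F0 M G"
  shows "smallest_common_superunit F0 M G G"
proof -
  have "is_unit F0 G" using assms unfolding subunit_def by auto
  then show ?thesis
    using assms subunit_refl unfolding smallest_common_superunit_def by blast
qed

text \<open>If M does not lie below G, then a common superunit of M and G is never G itself,
  hence lies above the parent G': M,G and M,G' have the same common superunits.\<close>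

lemma common_superunits_parent:
  assumes "\<not> subunit F0 M G" "child F0 G' G" "subunit F0 M K"
  shows "subunit F0 G K \<longleftrightarrow> subunit F0 G' K"
  using assms superunit_above_parent child_subunit subunit_trans by metis

lemma drives_parent_iff:
  assumes "\<not> subunit F0 M G" "child F0 G' G"
  shows "drives F0 M G H \<longleftrightarrow> drives F0 M G' H"
  using common_superunits_parent[OF assms]
  unfolding drives_def smallest_common_superunit_def by blast

text \<open>Driving passes from G to a parent G' that is not a ?-unit: when M lies below G,
  the only new candidate for a ?-unit between M and the new target is G' itself.\<close>

lemma drives_to_parent:
  assumes d: "drives F0 M G H" and c: "child F0 G' G" and not_quest: "\<not> is_quest_unit F0 G'"
  shows "\<exists>H'. drives F0 M G' H'"
proof (cases "subunit F0 M G")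
  case True
  have "H = G"
    using d smallest_common_superunit_unique smallest_common_superunit_of_subunit[OF True]
    unfolding drives_def by blast
  have MG': "subunit F0 M G'" using True c child_subunit subunit_trans by blast
  have "\<not> subunit F0 Q G'"
    if Q: "proper_subunit F0 M Q" "is_quest_unit F0 Q" for Q
  proof
    assume QG': "subunit F0 Q G'"
    have "\<not> subunit F0 Q G" using d Q \<open>H = G\<close> unfolding drives_def by blast
    then have "subunit F0 G Q" "Q \<noteq> G"
      using superunits_linear Q(1) True subunit_refl unfolding proper_subunit_def by blast+
    then have "Q = G'" using superunit_above_parent c QG' subunit_antisym by blast
    then show False using Q(2) not_quest by simp
  qed
  then have "drives F0 M G' G'"
    using smallest_common_superunit_of_subunit[OF MG'] unfolding drives_def by blast
  then show ?thesis by blast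
next
  case False
  then show ?thesis using d drives_parent_iff[OF False c] by blast
qed

text \<open>Conversely, driving the parent G' implies driving G: below G we use G itself,
  which lies under every superunit through which G' could be driven.\<close>

lemma drives_from_parent:
  assumes d: "drives F0 M G' H" and c: "child F0 G' G"
  shows "\<exists>H'. drives F0 M G H'"
proof (cases "subunit F0 M G")
  case True
  have "subunit F0 G H"
    using d c child_subunit subunit_trans unfolding drives_def smallest_common_superunit_def
    by blast
  then have "drives F0 M G G"
    using d subunit_trans smallest_common_superunit_of_subunit[OF True]
    unfolding drives_def by blast
  then show ?thesis by blast
next
  case False
  then show ?thesis using d drives_parent_iff[OF False c] by blast
qed

text \<open>The last target of a domination chain may be replaced by its parent G', provided
  G' is in the tree and not a ?-unit: the last link is re-driven by
  drives_to_parent, and the non-driving conditions toward G' follow from those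
  toward G by drives_from_parent.\<close>

lemma domination_chain_retarget:
  assumes ch: "domination_chain F0 \<Omega> F BE G n L M X"
    and c: "child F0 G' G" and not_quest: "\<not> is_quest_unit F0 G'"
  shows "\<exists>X'. domination_chain F0 \<Omega> F BE G' n (L(Suc n := G')) M X'"
proof -
  have n: "n \<ge> 1" and last: "L (Suc n) = G" and first: "subunit F0 (L 1) BE"
    using ch unfolding domination_chain_def by auto
  have link: "L i \<in> F" "M i \<in> F" "opposite F0 \<Omega> (L i) (M i)"
      "drives F0 (M i) (L (Suc i)) (X i)" "\<not> subunit F0 (M i) BE"
      "\<And>j. i + 2 \<le> j \<Longrightarrow> j \<le> Suc n \<Longrightarrow> \<not> drives F0 (M i) (L j) H"
    if "1 \<le> i" "i \<le> n" for i H
    using ch that unfolding domination_chain_def by blast+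
  obtain H' where H': "drives F0 (M n) G' H'"
    using drives_to_parent[OF link(4)[of n, unfolded last] c not_quest] n by blast
  have no_skip: "\<not> drives F0 (M i) G' H"
    if "1 \<le> i" "i + 2 \<le> Suc n" for i H
  proof
    assume "drives F0 (M i) G' H"
    then obtain H2 where "drives F0 (M i) (L (Suc n)) H2" using drives_from_parent c last by blast
    then show False using link(6)[of i "Suc n"] that by simp
  qed
  have "domination_chain F0 \<Omega> F BE G' n (L(Suc n := G')) M (X(n := H'))"
    unfolding domination_chain_def
  proof (intro conjI allI impI notI)
    fix i assume i: "1 \<le> i \<and> i \<le> n"
    show "(L(Suc n := G')) i \<in> F" "M i \<in> F" "opposite F0 \<Omega> ((L(Suc n := G')) i) (M i)"
      using link i by auto
    show "drives F0 (M i) ((L(Suc n := G')) (Suc i)) ((X(n := H')) i)"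
      using link(4) H' i by (cases "i = n") auto
    { assume "subunit F0 (M i) BE" then show False using link(5) i by blast }
    fix j assume j: "i + 2 \<le> j \<and> j \<le> Suc n"
    assume "\<exists>H. drives F0 (M i) ((L(Suc n := G')) j) H"
    then show False using link(6)[of i j] no_skip[of i] i j by (cases "j = Suc n") auto
  qed (use n first in auto)
  then show ?thesis by blast
qed

lemma dominates_parent:
  assumes dom: "dominates F0 \<Omega> F BE G" and c: "child F0 G' G" and G': "G' \<in> F"
    and not_quest: "\<not> is_quest_unit F0 G'"
  shows "G' = BE \<or> dominates F0 \<Omega> F BE G'"
proof -
  have base: "is_bang_unit F0 BE" "BE \<in> F" using dom unfolding dominates_def by auto
  consider (below) "proper_subunit F0 G BE"
    | (chain) n L M X where "domination_chain F0 \<Omega> F BE G n L M X"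
    using dom unfolding dominates_def by blast
  then show ?thesis
  proof cases
    case below
    then have "subunit F0 G' BE"
      using superunit_above_parent c unfolding proper_subunit_def by blast
    then show ?thesis using base G' unfolding dominates_def proper_subunit_def by blast
  next
    case chain
    then show ?thesis
      using domination_chain_retarget[OF _ c not_quest] base G' unfolding dominates_def by blast
  qed
qed

theorem lemma8p5:
  fixes F0 :: "'a formula" and \<Omega> :: run and F :: "ounit set" and BE G G' :: ounit
  assumes "is_run \<Omega>"
    and "unit_tree F0 F"
    and "BE \<in> F" and "G \<in> F" and "G' \<in> F"
    and "is_bang_unit F0 BE"
    and "dominates F0 \<Omega> F BE G"
    and "child F0 G' G"
  shows "((is_and_unit F0 G' \<or> is_or_unit F0 G') \<longrightarrow> dominates F0 \<Omega> F BE G')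
       \<and> (is_bang_unit F0 G' \<longrightarrow> (G' = BE \<or> dominates F0 \<Omega> F BE G'))"
proof (intro conjI impI)
  assume "is_and_unit F0 G' \<or> is_or_unit F0 G'"
  then have "\<not> is_quest_unit F0 G'" and "G' \<noteq> BE"
    using \<open>is_bang_unit F0 BE\<close>
    unfolding is_and_unit_def is_or_unit_def is_quest_unit_def is_bang_unit_def by auto
  then show "dominates F0 \<Omega> F BE G'"
    using dominates_parent[OF \<open>dominates F0 \<Omega> F BE G\<close> \<open>child F0 G' G\<close> \<open>G' \<in> F\<close>] by blast
next
  assume "is_bang_unit F0 G'"
  then have "\<not> is_quest_unit F0 G'" unfolding is_quest_unit_def is_bang_unit_def by auto
  then show "G' = BE \<or> dominates F0 \<Omega> F BE G'"
    using dominates_parent[OF \<open>dominates F0 \<Omega> F BE G\<close> \<open>child F0 G' G\<close> \<open>G' \<in> F\<close>] by blast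
qed

end
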